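(* Let $\mathcal{T}=(\mathcal{V},\mathcal{E})$ obey the LC-PF model and covariance assumption of the context. Let $r_{\min},x_{\min}$ be the minimum line resistance and reactance in $\mathcal{T}$, and set $k_1=\min(r_{\min}^2,x_{\min}^2)\min_{d}\big(\Omega_p(d,d)+\Omega_q(d,d)+2\Omega_{pq}(d,d)\big)$, the inner minimum being over non-root nodes $d$. Then for every node $a$ and every node $b\neq a$ with $(ab)\notin\mathcal{E}$, the neighbor $c$ of $a$ on the path from $a$ to $b$ (so $(ac)\in\mathcal{E}$) satisfies $\phi_{ab}\ge\phi_{ac}+k_1$.
   Context: $\mathcal{T}=(\mathcal{V},\mathcal{E})$ is a tree with a distinguished root (substation) of degree one. Each edge $(ab)$ has resistance $r_{ab}>0$ and reactance $x_{ab}>0$. Let $H_{1/r},H_{1/x}$ be the weighted Laplacians with edge weights $1/r_{ab}$, $1/x_{ab}$, with the root row and column removed. Non-root nodes have random injections $p_a,q_a$. The LC-PF model gives $v=H_{1/r}^{-1}p+H_{1/x}^{-1}q$ and $\theta=H_{1/x}^{-1}p-H_{1/r}^{-1}q$ at non-root nodes; the root voltage is constant. Covariance assumption: $\Omega_p,\Omega_q$ are the covariances of $p,q$, and $\Omega_{pq}=\mathbb{E}[(p-\mathbb{E}p)(q-\mathbb{E}q)^T]=\Omega_{qp}^T$. For distinct non-root $a,b$, $\Omega_p(a,b)=\Omega_q(a,b)=\Omega_{qp}(a,b)=0$, and $\Omega_{qp}(a,a)\ge0$. Define $\phi_{ab}=\mathbb{E}[((v_a-\mathbb{E}v_a)-(v_b-\mathbb{E}v_b))^2]$.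 *)

theory Defs
  imports "HOL-Probability.Probability"
begin

definition adj :: "'v set set \<Rightarrow> 'v \<Rightarrow> 'v \<Rightarrow> bool" where
  "adj E a b \<longleftrightarrow> a \<noteq> b \<and> {a, b} \<in> E"

definition is_tree :: "'v set \<Rightarrow> 'v set set \<Rightarrow> bool" where
  "is_tree V E \<longleftrightarrow> finite V \<and> V \<noteq> {}
     \<and> (\<forall>e\<in>E. \<exists>a\<in>V. \<exists>b\<in>V. a \<noteq> b \<and> e = {a, b})
     \<and> (\<forall>a\<in>V. \<forall>b\<in>V. (a, b) \<in> {(x, y). adj E x y}\<^sup>*)
     \<and> card E + 1 = card V"

definition simple_path :: "'v set set \<Rightarrow> 'v list \<Rightarrow> bool" where
  "simple_path E ps \<longleftrightarrow> ps \<noteq> [] \<and> distinct ps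
     \<and> (\<forall>i. Suc i < length ps \<longrightarrow> adj E (ps ! i) (ps ! Suc i))"

definition laplacian_w ::
  "'v set \<Rightarrow> 'v set set \<Rightarrow> ('v set \<Rightarrow> real) \<Rightarrow> 'v \<Rightarrow> 'v \<Rightarrow> real" where
  "laplacian_w V E w a b =
     (if a = b then (\<Sum>c\<in>V. if adj E a c then 1 / w {a, c} else 0)
      else if adj E a b then - (1 / w {a, b}) else 0)"

definition mat_inv_on :: "'v set \<Rightarrow> ('v \<Rightarrow> 'v \<Rightarrow> real) \<Rightarrow> 'v \<Rightarrow> 'v \<Rightarrow> real" where
  "mat_inv_on N H = (THE G. (\<forall>a\<in>N. \<forall>b\<in>N. (\<Sum>c\<in>N. H a c * G c b) = (if a = b then 1 else 0))
                          \<and> (\<forall>a b. a \<notin> N \<or> b \<notin> N \<longrightarrow> G a b = 0))"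

definition Hinv :: "'v set \<Rightarrow> 'v set set \<Rightarrow> 'v \<Rightarrow> ('v set \<Rightarrow> real) \<Rightarrow> 'v \<Rightarrow> 'v \<Rightarrow> real" where
  "Hinv V E rt w = mat_inv_on (V - {rt}) (laplacian_w V E w)"

definition cov :: "'w measure \<Rightarrow> ('w \<Rightarrow> real) \<Rightarrow> ('w \<Rightarrow> real) \<Rightarrow> real" where
  "cov M X Y = integral\<^sup>L M (\<lambda>\<omega>. (X \<omega> - integral\<^sup>L M X) * (Y \<omega> - integral\<^sup>L M Y))"

definition lcpf_v ::
  "'v set \<Rightarrow> 'v set set \<Rightarrow> 'v \<Rightarrow> ('v set \<Rightarrow> real) \<Rightarrow> ('v set \<Rightarrow> real) \<Rightarrow> real
    \<Rightarrow> ('v \<Rightarrow> 'w \<Rightarrow> real) \<Rightarrow> ('v \<Rightarrow> 'w \<Rightarrow> real) \<Rightarrow> 'v \<Rightarrow> 'w \<Rightarrow> real" where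
  "lcpf_v V E rt r x v0 p q a \<omega> =
     (if a = rt then v0
      else (\<Sum>d\<in>V - {rt}. Hinv V E rt r a d * p d \<omega> + Hinv V E rt x a d * q d \<omega>))"

definition phi :: "'w measure \<Rightarrow> ('v \<Rightarrow> 'w \<Rightarrow> real) \<Rightarrow> 'v \<Rightarrow> 'v \<Rightarrow> real" where
  "phi M v a b = integral\<^sup>L M (\<lambda>\<omega>. ((v a \<omega> - integral\<^sup>L M (v a)) - (v b \<omega> - integral\<^sup>L M (v b)))\<^sup>2)"

end

theory Submission
  imports Defs
begin

text \<open>In a tree the inverse reduced Laplacian is explicit: \<open>H\<^sub>1\<^sub>/\<^sub>w\<^sup>-\<^sup>1(y, d)\<close> is the total
  weight of the edges lying on the paths from the root to both \<open>y\<close> and \<open>d\<close>. Along a path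
  \<open>a = u\<^sub>0, u\<^sub>1, ..., u\<^sub>k = b\<close> the difference \<open>H\<^sup>-\<^sup>1(a, d) - H\<^sup>-\<^sup>1(b, d)\<close> is therefore a sum of terms
  \<open>\<plusminus>w(u\<^sub>i u\<^sub>i\<^sub>+\<^sub>1)\<close> or \<open>0\<close>, all of the same sign. As injections at distinct nodes are uncorrelated,
  \<open>\<phi>\<^sub>a\<^sub>b\<close> is a sum over nodes \<open>d\<close> of variances \<open>Var(\<alpha>\<^sub>d p\<^sub>d + \<beta>\<^sub>d q\<^sub>d)\<close>, where \<open>\<alpha>\<^sub>d\<close> and \<open>\<beta>\<^sub>d\<close> are
  these differences for \<open>w = r\<close> and \<open>w = x\<close>; with \<open>\<Omega>\<^sub>p\<^sub>q(d,d) \<ge> 0\<close> each variance grows when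
  \<open>b\<close> replaces \<open>c = u\<^sub>1\<close>, and for the endpoint of the edge \<open>u\<^sub>1u\<^sub>2\<close> away from the root it grows
  by at least \<open>k\<^sub>1\<close>.\<close>

section \<open>Edges of a tree separate it\<close>

definition adj_rel :: "'v set set \<Rightarrow> ('v \<times> 'v) set" where
  "adj_rel F = {(a, b). adj F a b}"

lemma adj_sym: "adj F a b \<Longrightarrow> adj F b a"
  unfolding adj_def by (metis insert_commute)

lemma adj_edge: "adj E y z \<Longrightarrow> {y, z} \<in> E"
  unfolding adj_def by simp

lemma adj_neq: "adj E y z \<Longrightarrow> y \<noteq> z"
  unfolding adj_def by simp

lemma adj_rel_rtrancl_sym: "(a, b) \<in> (adj_rel F)\<^sup>* \<Longrightarrow> (b, a) \<in> (adj_rel F)\<^sup>*"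
proof -
  have "sym (adj_rel F)" unfolding adj_rel_def by (rule symI) (simp add: adj_sym)
  then show "(a, b) \<in> (adj_rel F)\<^sup>* \<Longrightarrow> (b, a) \<in> (adj_rel F)\<^sup>*"
    by (metis sym_rtrancl symD)
qed

text \<open>Every vertex other than \<open>rt\<close> is mapped injectively to an edge towards a vertex
  strictly closer to \<open>rt\<close>.\<close>

lemma connected_card_le:
  assumes fin: "finite V" and edges: "\<forall>e\<in>F. \<exists>a\<in>V. \<exists>b\<in>V. a \<noteq> b \<and> e = {a, b}"
    and rt: "rt \<in> V" and conn: "\<forall>y\<in>V. (y, rt) \<in> (adj_rel F)\<^sup>*"
  shows "card V \<le> card F + 1"
proof -
  define hops where "hops y = (LEAST n. (y, rt) \<in> adj_rel F ^^ n)" for y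
  have closer: "\<exists>z. adj F y z \<and> hops z < hops y" if y: "y \<in> V" "y \<noteq> rt" for y
  proof -
    obtain n where "(y, rt) \<in> adj_rel F ^^ n" using conn y rtrancl_power by blast
    then have hy: "(y, rt) \<in> adj_rel F ^^ hops y" unfolding hops_def by (rule LeastI)
    with y obtain m where m: "hops y = Suc m" by (cases "hops y") auto
    with hy obtain z where z: "(y, z) \<in> adj_rel F" "(z, rt) \<in> adj_rel F ^^ m"
      using relpow_Suc_D2 by metis
    then have "hops z \<le> m" unfolding hops_def by (simp add: Least_le)
    with z m show ?thesis unfolding adj_rel_def by auto
  qed
  define f where "f y = (SOME e. \<exists>z. e = {y, z} \<and> adj F y z \<and> hops z < hops y)" for y
  have f: "\<exists>z. f y = {y, z} \<and> adj F y z \<and> hops z < hops y" if "y \<in> V - {rt}" for y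
    unfolding f_def by (rule someI_ex) (use closer that in blast)
  have "inj_on f (V - {rt})"
  proof (rule inj_onI)
    fix y1 y2 assume y: "y1 \<in> V - {rt}" "y2 \<in> V - {rt}" "f y1 = f y2"
    obtain z1 where z1: "f y1 = {y1, z1}" "hops z1 < hops y1" using f[OF y(1)] by blast
    obtain z2 where z2: "f y2 = {y2, z2}" "hops z2 < hops y2" using f[OF y(2)] by blast
    show "y1 = y2"
      using y(3) z1 z2 by (auto simp: doubleton_eq_iff)
  qed
  moreover have "f ` (V - {rt}) \<subseteq> F" using f unfolding adj_def by force
  moreover have "finite F"
    using edges by (intro finite_subset[OF _ finite_Pow_iff[THEN iffD2, OF fin]]) auto
  ultimately have "card (V - {rt}) \<le> card F" by (rule card_inj_on_le)
  then show ?thesis using rt fin by (simp add: card_Diff_singleton)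
qed

locale rooted_tree =
  fixes V :: "'v set" and E :: "'v set set" and rt :: 'v
  assumes tree: "is_tree V E" and root_in_V: "rt \<in> V"
begin

lemma finite_V: "finite V"
  using tree unfolding is_tree_def by auto

lemma edges_of_V: "\<forall>e\<in>E. \<exists>a\<in>V. \<exists>b\<in>V. a \<noteq> b \<and> e = {a, b}"
  using tree unfolding is_tree_def by auto

lemma connected: "a \<in> V \<Longrightarrow> b \<in> V \<Longrightarrow> (a, b) \<in> (adj_rel E)\<^sup>*"
  using tree unfolding is_tree_def adj_rel_def by auto

lemma finite_E: "finite E"
  using edges_of_V by (intro finite_subset[OF _ finite_Pow_iff[THEN iffD2, OF finite_V]]) auto

lemma edge_in_V: "{u, u'} \<in> E \<Longrightarrow> u \<in> V \<and> u' \<in> V"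
  using edges_of_V by (force simp: doubleton_eq_iff)

lemma adj_in_V: "adj E a b \<Longrightarrow> a \<in> V \<and> b \<in> V"
  unfolding adj_def using edge_in_V by blast

definition conn_without :: "'v set \<Rightarrow> 'v \<Rightarrow> 'v \<Rightarrow> bool" where
  "conn_without e y z \<longleftrightarrow> (y, z) \<in> (adj_rel (E - {e}))\<^sup>*"

lemma conn_without_refl [simp]: "conn_without e y y"
  unfolding conn_without_def by simp

lemma conn_without_sym: "conn_without e y z \<Longrightarrow> conn_without e z y"
  unfolding conn_without_def by (rule adj_rel_rtrancl_sym)

lemma conn_without_trans: "conn_without e y z \<Longrightarrow> conn_without e z u \<Longrightarrow> conn_without e y u"
  unfolding conn_without_def by simp

lemma conn_without_adj: "adj E y z \<Longrightarrow> {y, z} \<noteq> e \<Longrightarrow> conn_without e y z"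
  unfolding conn_without_def adj_rel_def adj_def by (intro r_into_rtrancl) auto

lemma adj_rel_without: "(y, z) \<in> adj_rel (E - {e}) \<Longrightarrow> adj E y z \<and> {y, z} \<noteq> e"
  unfolding adj_rel_def adj_def by simp

text \<open>If \<open>E - {e}\<close> still connected \<open>V\<close>, it would have at least \<open>card V - 1 = card E\<close> edges.\<close>

lemma edge_bridge: assumes e: "{u, u'} \<in> E" shows "\<not> conn_without {u, u'} u u'"
proof
  assume c: "conn_without {u, u'} u u'"
  have "adj_rel E \<subseteq> (adj_rel (E - {{u, u'}}))\<^sup>*"
  proof
    fix p assume "p \<in> adj_rel E"
    then obtain a b where p: "p = (a, b)" "adj E a b" unfolding adj_rel_def by auto
    show "p \<in> (adj_rel (E - {{u, u'}}))\<^sup>*"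
    proof (cases "{a, b} = {u, u'}")
      case True
      then have "(a = u \<and> b = u') \<or> (a = u' \<and> b = u)" using p(2) by (auto simp: doubleton_eq_iff)
      then show ?thesis using c conn_without_sym[OF c] p unfolding conn_without_def by auto
    next
      case False
      then show ?thesis using conn_without_adj[OF p(2) False] p unfolding conn_without_def by auto
    qed
  qed
  then have "(adj_rel E)\<^sup>* \<subseteq> (adj_rel (E - {{u, u'}}))\<^sup>*"
    by (metis rtrancl_idemp rtrancl_mono)
  then have "card V \<le> card (E - {{u, u'}}) + 1"
    using edges_of_V connected root_in_V by (intro connected_card_le[OF finite_V _ root_in_V]) auto
  moreover have "card E = Suc (card (E - {{u, u'}}))" using card.remove[OF finite_E e] .
  ultimately show False using tree unfolding is_tree_def by simp
qed

lemma conn_without_endpoint: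
  assumes e: "{u, u'} \<in> E" and y: "y \<in> V"
  shows "conn_without {u, u'} y u \<or> conn_without {u, u'} y u'"
proof -
  have "(u, y) \<in> (adj_rel E)\<^sup>*" using connected edge_in_V[OF e] y by simp
  then show ?thesis
  proof (induction rule: rtrancl_induct)
    case base then show ?case by simp
  next
    case (step z y)
    then have a: "adj E z y" unfolding adj_rel_def by auto
    show ?case
    proof (cases "{z, y} = {u, u'}")
      case True
      then have "y = u \<or> y = u'" by (metis insertCI insertE singletonD)
      then show ?thesis by (elim disjE) simp_all
    next
      case False
      have "conn_without {u, u'} y z" by (rule conn_without_sym, rule conn_without_adj[OF a False])
      with step.IH show ?thesis by (metis conn_without_trans)
    qed
  qed
qed

lemma conn_without_split:
  assumes "conn_without e a z" shows "conn_without f a z \<or> (\<exists>y\<in>f. conn_without e a y)"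
  using assms unfolding conn_without_def
proof (induction rule: rtrancl_induct)
  case base then show ?case by simp
next
  case (step z' z)
  have a: "adj E z' z" "{z', z} \<noteq> e" using adj_rel_without[OF step.hyps(2)] by simp_all
  show ?case
  proof (cases "{z', z} = f")
    case True
    then show ?thesis using step.hyps(1) by blast
  next
    case False
    then have "(z', z) \<in> (adj_rel (E - {f}))\<^sup>*"
      using conn_without_adj[OF a(1)] unfolding conn_without_def by blast
    with step.IH show ?thesis by (meson rtrancl_trans)
  qed
qed

definition first_hop :: "'v \<Rightarrow> 'v \<Rightarrow> 'v \<Rightarrow> bool" where
  "first_hop x y c \<longleftrightarrow> adj E x c \<and> conn_without {x, c} y c"

lemma first_hop_self: "\<not> first_hop x x c"
  unfolding first_hop_def using edge_bridge[OF adj_edge] by blast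

lemma first_hop_exists:
  assumes "x \<in> V" "y \<in> V" "y \<noteq> x" shows "\<exists>c. first_hop x y c"
proof -
  have "(x, y) \<in> (adj_rel E)\<^sup>*" using connected assms(1,2) by simp
  then have "y = x \<or> (\<exists>c. first_hop x y c)"
  proof (induction rule: rtrancl_induct)
    case base then show ?case by simp
  next
    case (step z' z)
    have a: "adj E z' z" using step.hyps(2) unfolding adj_rel_def by simp
    from step.IH show ?case
    proof
      assume "z' = x"
      then have "first_hop x z z" using a unfolding first_hop_def by simp
      then show ?thesis by blast
    next
      assume "\<exists>c. first_hop x z' c"
      then obtain c where c: "adj E x c" "conn_without {x, c} z' c" unfolding first_hop_def by blast
      show ?thesis
      proof (cases "{z', z} = {x, c}")
        case False
        have "conn_without {x, c} z z'" by (rule conn_without_sym, rule conn_without_adj[OF a False])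
        then have "conn_without {x, c} z c" using c(2) by (rule conn_without_trans)
        then show ?thesis using c(1) unfolding first_hop_def by blast
      next
        case True
        then consider "z' = x" | "z' = c" "z = x" using adj_neq[OF a] by (metis doubleton_eq_iff)
        then show ?thesis
        proof cases
          case 1
          then show ?thesis using c edge_bridge[OF adj_edge[OF c(1)]] by simp
        qed simp
      qed
    qed
  qed
  with assms(3) show ?thesis by simp
qed

lemma first_hop_not_conn_source:
  assumes "first_hop x y c" shows "\<not> conn_without {x, c} y x"
proof
  assume "conn_without {x, c} y x"
  moreover have "conn_without {x, c} y c" using assms unfolding first_hop_def by simp
  ultimately have "conn_without {x, c} x c" by (metis conn_without_sym conn_without_trans)
  then show False using edge_bridge[OF adj_edge] assms unfolding first_hop_def by blast
qed

lemma first_hop_unique: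
  assumes h1: "first_hop x y c1" and h2: "first_hop x y c2" shows "c1 = c2"
proof (rule ccontr)
  assume ne: "c1 \<noteq> c2"
  have a1: "adj E x c1" and a2: "adj E x c2" and y2: "conn_without {x, c2} y c2"
    using h1 h2 unfolding first_hop_def by simp_all
  have "{c2, x} \<noteq> {x, c1}" "{c1, x} \<noteq> {x, c2}"
    using ne adj_neq[OF a1] adj_neq[OF a2] by (auto simp: doubleton_eq_iff)
  then have c21: "conn_without {x, c1} c2 x" and c12: "conn_without {x, c2} c1 x"
    using conn_without_adj[OF adj_sym[OF a2]] conn_without_adj[OF adj_sym[OF a1]] by simp_all
  from conn_without_split[OF y2, of "{x, c1}"] show False
  proof
    assume "conn_without {x, c1} y c2"
    then have "conn_without {x, c1} y x" using c21 by (rule conn_without_trans)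
    then show False using first_hop_not_conn_source[OF h1] by simp
  next
    assume "\<exists>z\<in>{x, c1}. conn_without {x, c2} y z"
    then have "conn_without {x, c2} y x"
      using c12 conn_without_trans[of "{x, c2}" y c1 x] by auto
    then show False using first_hop_not_conn_source[OF h2] by simp
  qed
qed

lemma sum_first_hop:
  assumes "x \<in> V" "y \<in> V" shows "(\<Sum>c\<in>V. of_bool (first_hop x y c) :: real) = of_bool (x \<noteq> y)"
proof (cases "x = y")
  case True
  then show ?thesis using first_hop_self by simp
next
  case False
  then obtain c where c: "first_hop x y c" using first_hop_exists assms by metis
  then have "c \<in> V" unfolding first_hop_def using adj_in_V by blast
  moreover have "first_hop x y c' \<longleftrightarrow> c' = c" for c' using c first_hop_unique by blast
  ultimately show ?thesis using False finite_V by simp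
qed

end

section \<open>The inverse of the reduced Laplacian\<close>

lemma laplacian_w_sym: "laplacian_w V E w a b = laplacian_w V E w b a"
  unfolding laplacian_w_def by (auto simp: insert_commute dest: adj_sym)

text \<open>A symmetric right inverse of a symmetric matrix is also a left inverse, hence the unique
  inverse.\<close>

lemma mat_inv_on_eqI:
  fixes H G :: "'a \<Rightarrow> 'a \<Rightarrow> real"
  assumes fin: "finite N"
    and inv: "\<And>a b. a \<in> N \<Longrightarrow> b \<in> N \<Longrightarrow> (\<Sum>c\<in>N. H a c * G c b) = of_bool (a = b)"
    and H_sym: "\<And>a b. H a b = H b a" and G_sym: "\<And>a b. G a b = G b a"
    and zero: "\<And>a b. a \<notin> N \<or> b \<notin> N \<Longrightarrow> G a b = 0"
  shows "mat_inv_on N H = G"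
  unfolding mat_inv_on_def
proof (rule the_equality)
  show "(\<forall>a\<in>N. \<forall>b\<in>N. (\<Sum>c\<in>N. H a c * G c b) = (if a = b then 1 else 0))
        \<and> (\<forall>a b. a \<notin> N \<or> b \<notin> N \<longrightarrow> G a b = 0)"
    using inv zero by simp
next
  fix G'
  assume G': "(\<forall>a\<in>N. \<forall>b\<in>N. (\<Sum>c\<in>N. H a c * G' c b) = (if a = b then 1 else 0))
              \<and> (\<forall>a b. a \<notin> N \<or> b \<notin> N \<longrightarrow> G' a b = 0)"
  have left: "(\<Sum>c'\<in>N. G a c' * H c' c) = of_bool (a = c)" if "a \<in> N" "c \<in> N" for a c
    using inv[OF that(2,1)] by (simp add: H_sym G_sym mult.commute eq_commute)
  show "G' = G"
  proof (intro ext)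
    fix a b
    show "G' a b = G a b"
    proof (cases "a \<in> N \<and> b \<in> N")
      case True
      have "G' a b = (\<Sum>c\<in>N. if a = c then G' c b else 0)"
        using True fin by (simp add: sum.delta)
      also have "\<dots> = (\<Sum>c\<in>N. of_bool (a = c) * G' c b)"
        by (intro sum.cong) auto
      also have "\<dots> = (\<Sum>c\<in>N. \<Sum>c'\<in>N. G a c' * H c' c * G' c b)"
        using True by (intro sum.cong refl) (simp add: left[symmetric] sum_distrib_right)
      also have "\<dots> = (\<Sum>c'\<in>N. G a c' * (\<Sum>c\<in>N. H c' c * G' c b))"
        by (subst sum.swap) (simp add: sum_distrib_left mult.assoc)
      also have "\<dots> = (\<Sum>c'\<in>N. if c' = b then G a c' else 0)"
        using True G' by (intro sum.cong refl) auto
      also have "\<dots> = G a b"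
        using True fin by (simp add: sum.delta)
      finally show ?thesis .
    qed (use G' zero in auto)
  qed
qed

context rooted_tree
begin

lemma conn_without_one_side:
  assumes e: "{u, u'} \<in> E" and y: "y \<in> V"
  shows "conn_without {u, u'} y u \<longleftrightarrow> \<not> conn_without {u, u'} y u'"
proof
  assume yu: "conn_without {u, u'} y u"
  show "\<not> conn_without {u, u'} y u'"
  proof
    assume "conn_without {u, u'} y u'"
    then have "conn_without {u, u'} u u'" by (rule conn_without_trans[OF conn_without_sym[OF yu]])
    with edge_bridge[OF e] show False by simp
  qed
qed (use conn_without_endpoint[OF e y] in blast)

lemma conn_without_same_side:
  assumes e: "{u, u'} \<in> E" and a: "a \<in> V" and b: "b \<in> V"
  shows "conn_without {u, u'} a b \<longleftrightarrow> (conn_without {u, u'} a u \<longleftrightarrow> conn_without {u, u'} b u)"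
proof
  assume "conn_without {u, u'} a b"
  then show "conn_without {u, u'} a u \<longleftrightarrow> conn_without {u, u'} b u"
    using conn_without_trans conn_without_sym by blast
next
  assume same: "conn_without {u, u'} a u \<longleftrightarrow> conn_without {u, u'} b u"
  show "conn_without {u, u'} a b"
  proof (cases "conn_without {u, u'} a u")
    case True
    then show ?thesis using same conn_without_trans conn_without_sym by blast
  next
    case False
    then have "conn_without {u, u'} a u'" "conn_without {u, u'} b u'"
      using same conn_without_one_side[OF e a] conn_without_one_side[OF e b] by blast+
    then show ?thesis using conn_without_trans conn_without_sym by blast
  qed
qed

definition below :: "'v set \<Rightarrow> 'v set" where
  "below e = {y \<in> V. \<not> conn_without e y rt}"

text \<open>The entry \<open>(y, d)\<close> of \<open>H\<^sub>1\<^sub>/\<^sub>w\<^sup>-\<^sup>1\<close>: the total weight of the edges shared by the paths from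
  the root to \<open>y\<close> and to \<open>d\<close>.\<close>

definition green :: "('v set \<Rightarrow> real) \<Rightarrow> 'v \<Rightarrow> 'v \<Rightarrow> real" where
  "green w y d = (\<Sum>e\<in>E. if y \<in> below e \<and> d \<in> below e then w e else 0)"

definition side_sign :: "'v \<Rightarrow> 'v \<Rightarrow> 'v \<Rightarrow> real" where
  "side_sign y z d = of_bool (conn_without {y, z} d y) - of_bool (conn_without {y, z} rt y)"

lemma green_root: "green w rt d = 0"
  unfolding green_def below_def by simp

lemma green_sym: "green w y d = green w d y"
  unfolding green_def by (simp add: conj_commute)

lemma below_adj_iff:
  assumes a: "adj E y z" and e: "e \<noteq> {y, z}"
  shows "y \<in> below e \<longleftrightarrow> z \<in> below e"
proof -
  have "conn_without e y z" using conn_without_adj[OF a] e by metis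
  then have "conn_without e y rt \<longleftrightarrow> conn_without e z rt"
    by (metis conn_without_sym conn_without_trans)
  then show ?thesis unfolding below_def using adj_in_V[OF a] by simp
qed

lemma below_edge_side_sign:
  assumes a: "adj E y z" and d: "d \<in> V"
  shows "of_bool (d \<in> below {y, z}) * (of_bool (y \<in> below {y, z}) - of_bool (z \<in> below {y, z}))
         = side_sign y z d"
proof -
  have e: "{y, z} \<in> E" and V: "y \<in> V" "z \<in> V" using adj_edge[OF a] adj_in_V[OF a] by simp_all
  have below: "u \<in> below {y, z} \<longleftrightarrow> (conn_without {y, z} u y \<longleftrightarrow> \<not> conn_without {y, z} rt y)"
    if "u \<in> V" for u
    using conn_without_same_side[OF e that root_in_V] that unfolding below_def by auto
  have "\<not> conn_without {y, z} z y"
    using conn_without_one_side[OF e V(2)] by simp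
  then show ?thesis
    unfolding side_sign_def using below[OF d] below[OF V(1)] below[OF V(2)] by auto
qed

lemma green_diff_adj:
  assumes a: "adj E y z" and d: "d \<in> V"
  shows "green w y d - green w z d = w {y, z} * side_sign y z d"
proof -
  let ?t = "\<lambda>u e. if u \<in> below e \<and> d \<in> below e then w e else 0"
  have "green w y d - green w z d = (\<Sum>e\<in>E. ?t y e - ?t z e)"
    unfolding green_def by (simp add: sum_subtractf)
  also have "\<dots> = ?t y {y, z} - ?t z {y, z}"
  proof -
    have "(\<Sum>e\<in>E - {{y, z}}. ?t y e - ?t z e) = 0"
      using below_adj_iff[OF a] by (intro sum.neutral) auto
    then show ?thesis by (simp only: sum.remove[OF finite_E adj_edge[OF a]] add_0_right)
  qed
  also have "\<dots> = w {y, z} * side_sign y z d"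
    unfolding below_edge_side_sign[OF a d, symmetric]
    by (cases "d \<in> below {y, z}"; cases "y \<in> below {y, z}"; cases "z \<in> below {y, z}") simp_all
  finally show ?thesis .
qed

lemma side_sign_first_hop:
  assumes p: "first_hop x rt p" and c: "adj E x c" and d: "d \<in> V"
  shows "side_sign x c d = of_bool (c = p) - of_bool (first_hop x d c)"
proof -
  have e: "{x, c} \<in> E" using adj_edge[OF c] .
  have "conn_without {x, c} rt c \<longleftrightarrow> c = p"
    using first_hop_unique[OF _ p] p c unfolding first_hop_def by blast
  then show ?thesis
    unfolding side_sign_def first_hop_def
    using conn_without_one_side[OF e d] conn_without_one_side[OF e root_in_V] c by simp
qed

lemma sum_side_sign_neighbours:
  assumes x: "x \<in> V" "x \<noteq> rt" and d: "d \<in> V"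
  shows "(\<Sum>c\<in>V. if adj E x c then side_sign x c d else 0) = of_bool (x = d)"
proof -
  obtain p where p: "first_hop x rt p" using first_hop_exists[OF x(1) root_in_V] x(2) by metis
  have pV: "p \<in> V" and xp: "adj E x p" using p adj_in_V unfolding first_hop_def by blast+
  have "(\<Sum>c\<in>V. if adj E x c then side_sign x c d else 0)
      = (\<Sum>c\<in>V. of_bool (c = p) - of_bool (first_hop x d c))"
    using side_sign_first_hop[OF p _ d] xp by (intro sum.cong) (auto simp: first_hop_def)
  also have "\<dots> = 1 - of_bool (x \<noteq> d)"
    using sum_first_hop[OF x(1) d] pV finite_V by (simp add: sum_subtractf)
  finally show ?thesis by simp
qed

lemma laplacian_green:
  assumes w: "\<forall>e\<in>E. 0 < w e" and x: "x \<in> V - {rt}" and d: "d \<in> V - {rt}"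
  shows "(\<Sum>c\<in>V - {rt}. laplacian_w V E w x c * green w c d) = of_bool (x = d)"
proof -
  let ?n = "\<lambda>c. if adj E x c then 1 / w {x, c} else 0"
  have L: "laplacian_w V E w x c * g = (if c = x then sum ?n V * g else 0) - ?n c * g" for c g
    unfolding laplacian_w_def using adj_neq[of E x x] by (cases "c = x") auto
  have "(\<Sum>c\<in>V - {rt}. laplacian_w V E w x c * green w c d)
      = (\<Sum>c\<in>V. laplacian_w V E w x c * green w c d)"
    using sum.remove[OF finite_V root_in_V, of "\<lambda>c. laplacian_w V E w x c * green w c d"]
    by (simp add: green_root)
  also have "\<dots> = sum ?n V * green w x d - (\<Sum>c\<in>V. ?n c * green w c d)"
    using x finite_V by (simp add: L sum_subtractf sum.delta')
  also have "\<dots> = (\<Sum>c\<in>V. ?n c * (green w x d - green w c d))"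
    by (simp add: sum_distrib_right right_diff_distrib sum_subtractf)
  also have "\<dots> = (\<Sum>c\<in>V. if adj E x c then side_sign x c d else 0)"
  proof (intro sum.cong refl)
    fix c
    show "?n c * (green w x d - green w c d) = (if adj E x c then side_sign x c d else 0)"
    proof (cases "adj E x c")
      case True
      then have "0 < w {x, c}" using w adj_edge[OF True] by blast
      then show ?thesis using green_diff_adj[OF True, of d w] d by simp
    qed simp
  qed
  also have "\<dots> = of_bool (x = d)" using sum_side_sign_neighbours x d by simp
  finally show ?thesis .
qed

lemma Hinv_eq_green:
  assumes w: "\<forall>e\<in>E. 0 < w e" and y: "y \<in> V" and d: "d \<in> V - {rt}"
  shows "Hinv V E rt w y d = green w y d"
proof -
  let ?N = "V - {rt}"
  define G where "G a b = (if a \<in> ?N \<and> b \<in> ?N then green w a b else 0)" for a b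
  have "mat_inv_on ?N (laplacian_w V E w) = G"
  proof (rule mat_inv_on_eqI)
    show "(\<Sum>c\<in>?N. laplacian_w V E w a c * G c b) = of_bool (a = b)" if "a \<in> ?N" "b \<in> ?N" for a b
    proof -
      have "(\<Sum>c\<in>?N. laplacian_w V E w a c * G c b) = (\<Sum>c\<in>?N. laplacian_w V E w a c * green w c b)"
        using that(2) unfolding G_def by (intro sum.cong) auto
      then show ?thesis using laplacian_green[OF w that] by simp
    qed
  qed (use finite_V laplacian_w_sym green_sym in \<open>auto simp: G_def\<close>)
  then show ?thesis unfolding Hinv_def G_def using y d by (auto simp: green_root)
qed

end

section \<open>Simple paths\<close>

lemma simple_path_adj: "simple_path E ps \<Longrightarrow> Suc i < length ps \<Longrightarrow> adj E (ps ! i) (ps ! Suc i)"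
  unfolding simple_path_def by blast

lemma simple_path_edges_neq:
  assumes sp: "simple_path E ps" and i: "Suc (Suc i) < length ps"
  shows "{ps ! i, ps ! Suc i} \<noteq> {ps ! Suc i, ps ! Suc (Suc i)}"
proof
  assume eq: "{ps ! i, ps ! Suc i} = {ps ! Suc i, ps ! Suc (Suc i)}"
  have "ps ! i \<noteq> ps ! Suc i" using adj_neq[OF simple_path_adj[OF sp]] i by simp
  with eq have "ps ! i = ps ! Suc (Suc i)" by (auto simp: doubleton_eq_iff)
  moreover have "distinct ps" using sp unfolding simple_path_def by simp
  ultimately show False using nth_eq_iff_index_eq i by fastforce
qed

lemma simple_path_length_ge_3:
  assumes sp: "simple_path E ps" and "hd ps \<noteq> last ps" and "\<not> adj E (hd ps) (last ps)"
  shows "3 \<le> length ps"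
proof (rule ccontr)
  have ne: "ps \<noteq> []" using sp unfolding simple_path_def by simp
  assume "\<not> 3 \<le> length ps"
  with ne have "length ps = 1 \<or> length ps = 2" by (cases "length ps") auto
  then show False
  proof
    assume "length ps = 1"
    then show False using assms(2) ne by (simp add: hd_conv_nth last_conv_nth)
  next
    assume 2: "length ps = 2"
    then have "adj E (ps ! 0) (ps ! 1)" using sp unfolding simple_path_def by simp
    then show False using assms(3) 2 ne by (simp add: hd_conv_nth last_conv_nth)
  qed
qed

context rooted_tree
begin

lemma conn_without_path_step:
  assumes sp: "simple_path E ps" and i: "Suc (Suc i) < length ps" and y: "y \<in> V"
    and near: "conn_without {ps ! i, ps ! Suc i} y (ps ! i)"
  shows "conn_without {ps ! Suc i, ps ! Suc (Suc i)} y (ps ! Suc i)"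
proof -
  define a b c where "a = ps ! i" and "b = ps ! Suc i" and "c = ps ! Suc (Suc i)"
  have ab: "adj E a b" and bc: "adj E b c"
    unfolding a_def b_def c_def using simple_path_adj[OF sp] i by simp_all
  have ne: "{a, b} \<noteq> {b, c}" unfolding a_def b_def c_def using simple_path_edges_neq[OF sp i] .
  have near: "conn_without {a, b} y a" using near unfolding a_def b_def .
  have not_b: "\<not> conn_without {a, b} y b" using conn_without_one_side[OF adj_edge[OF ab] y] near by simp
  have "conn_without {b, c} y b"
    using conn_without_split[OF near, of "{b, c}"]
  proof
    assume "conn_without {b, c} y a"
    then show ?thesis using conn_without_adj[OF ab ne] by (rule conn_without_trans)
  next
    assume "\<exists>z\<in>{b, c}. conn_without {a, b} y z"
    moreover have "conn_without {a, b} c b"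
      using conn_without_adj[OF adj_sym[OF bc]] ne by (metis insert_commute)
    ultimately show ?thesis using not_b conn_without_trans by blast
  qed
  then show ?thesis unfolding b_def c_def .
qed

lemma conn_without_path_mono:
  assumes sp: "simple_path E ps" and ij: "i \<le> j" and j: "Suc j < length ps" and y: "y \<in> V"
    and near: "conn_without {ps ! i, ps ! Suc i} y (ps ! i)"
  shows "conn_without {ps ! j, ps ! Suc j} y (ps ! j)"
  using ij j
proof (induction j)
  case 0
  then show ?case using near by simp
next
  case (Suc j)
  show ?case
  proof (cases "i = Suc j")
    case True
    then show ?thesis using near by simp
  next
    case False
    then have "conn_without {ps ! j, ps ! Suc j} y (ps ! j)" using Suc by simp
    then show ?thesis using conn_without_path_step[OF sp _ y] Suc.prems by simp
  qed
qed

lemma side_sign_cases: "side_sign y z d \<in> {-1, 0, 1}"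
  unfolding side_sign_def by simp

lemma side_sign_path_same_sign:
  assumes sp: "simple_path E ps" and d: "d \<in> V"
  shows "(\<forall>i<length ps - 1. 0 \<le> side_sign (ps ! i) (ps ! Suc i) d)
       \<or> (\<forall>i<length ps - 1. side_sign (ps ! i) (ps ! Suc i) d \<le> 0)"
proof (rule ccontr)
  assume "\<not> ?thesis"
  then obtain i j where i: "i < length ps - 1" "side_sign (ps ! i) (ps ! Suc i) d < 0"
    and j: "j < length ps - 1" "side_sign (ps ! j) (ps ! Suc j) d > 0"
    by (meson not_le)
  from i(2) have ci: "\<not> conn_without {ps ! i, ps ! Suc i} d (ps ! i)"
      "conn_without {ps ! i, ps ! Suc i} rt (ps ! i)"
    unfolding side_sign_def by (auto split: if_splits)
  from j(2) have cj: "conn_without {ps ! j, ps ! Suc j} d (ps ! j)"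
      "\<not> conn_without {ps ! j, ps ! Suc j} rt (ps ! j)"
    unfolding side_sign_def by (auto split: if_splits)
  show False
  proof (cases "i \<le> j")
    case True
    have "Suc j < length ps" using j(1) by linarith
    then show False using conn_without_path_mono[OF sp True _ root_in_V ci(2)] cj(2) by simp
  next
    case False
    then have "j \<le> i" by simp
    moreover have "Suc i < length ps" using i(1) by linarith
    ultimately show False using conn_without_path_mono[OF sp _ _ d cj(1)] ci(1) by simp
  qed
qed

lemma green_diff_path:
  assumes sp: "simple_path E ps" and d: "d \<in> V"
  shows "green w (hd ps) d - green w (last ps) d
       = (\<Sum>i<length ps - 1. w {ps ! i, ps ! Suc i} * side_sign (ps ! i) (ps ! Suc i) d)"
proof -
  have "ps \<noteq> []" using sp unfolding simple_path_def by simp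
  then have "green w (hd ps) d - green w (last ps) d
      = (\<Sum>i<length ps - 1. green w (ps ! i) d - green w (ps ! Suc i) d)"
    using sum_lessThan_telescope'[of "\<lambda>i. green w (ps ! i) d" "length ps - 1"]
    by (simp add: hd_conv_nth last_conv_nth)
  also have "\<dots> = (\<Sum>i<length ps - 1. w {ps ! i, ps ! Suc i} * side_sign (ps ! i) (ps ! Suc i) d)"
    using green_diff_adj[OF simple_path_adj[OF sp] d] by (intro sum.cong) auto
  finally show ?thesis .
qed

lemma side_sign_nonzero:
  assumes a: "adj E y z" shows "\<exists>d\<in>V - {rt}. side_sign y z d \<noteq> 0"
proof (cases "conn_without {y, z} rt y")
  case True
  have "\<not> conn_without {y, z} z y" using conn_without_one_side[OF adj_edge[OF a]] adj_in_V[OF a] by simp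
  then have "z \<noteq> rt" and "side_sign y z z \<noteq> 0" using True unfolding side_sign_def by auto
  then show ?thesis using adj_in_V[OF a] by blast
next
  case False
  then have "y \<noteq> rt" and "side_sign y z y \<noteq> 0" unfolding side_sign_def by auto
  then show ?thesis using adj_in_V[OF a] by blast
qed

end

section \<open>The variance gap along a path\<close>

definition quad_form :: "real \<Rightarrow> real \<Rightarrow> real \<Rightarrow> real \<Rightarrow> real \<Rightarrow> real" where
  "quad_form sp sq spq a b = a\<^sup>2 * sp + b\<^sup>2 * sq + 2 * a * b * spq"

lemma quad_form_uminus: "quad_form sp sq spq (- a) (- b) = quad_form sp sq spq a b"
  unfolding quad_form_def by simp

lemma quad_form_margin:
  assumes a: "0 \<le> a0" "a0 + \<rho> \<le> a" and b: "0 \<le> b0" "b0 + \<xi> \<le> b" and "0 \<le> \<rho>" "0 \<le> \<xi>"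
    and sig: "0 \<le> sp" "0 \<le> sq" "0 \<le> spq"
  shows "quad_form sp sq spq a0 b0 + min (\<rho>\<^sup>2) (\<xi>\<^sup>2) * (sp + sq + 2 * spq) \<le> quad_form sp sq spq a b"
proof -
  let ?m = "min (\<rho>\<^sup>2) (\<xi>\<^sup>2)"
  have "a0\<^sup>2 + \<rho>\<^sup>2 \<le> (a0 + \<rho>)\<^sup>2" and "b0\<^sup>2 + \<xi>\<^sup>2 \<le> (b0 + \<xi>)\<^sup>2"
    using assms by (simp_all add: power2_sum)
  moreover have "(a0 + \<rho>)\<^sup>2 \<le> a\<^sup>2" and "(b0 + \<xi>)\<^sup>2 \<le> b\<^sup>2"
    using assms by (auto intro!: power_mono)
  ultimately have sq_a: "a0\<^sup>2 + ?m \<le> a\<^sup>2" and sq_b: "b0\<^sup>2 + ?m \<le> b\<^sup>2"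
    by (smt (verit) min.cobounded1 min.cobounded2)+
  have "?m \<le> \<rho> * \<xi>"
  proof (cases "\<rho> \<le> \<xi>")
    case True
    then have "\<rho> * \<rho> \<le> \<rho> * \<xi>" using \<open>0 \<le> \<rho>\<close> by (rule mult_left_mono)
    then show ?thesis by (simp add: power2_eq_square min_le_iff_disj)
  next
    case False
    then have "\<xi> * \<xi> \<le> \<rho> * \<xi>" using \<open>0 \<le> \<xi>\<close> by (intro mult_right_mono) auto
    then show ?thesis by (simp add: power2_eq_square min_le_iff_disj)
  qed
  moreover have "a0 * b0 + \<rho> * \<xi> \<le> (a0 + \<rho>) * (b0 + \<xi>)"
    using assms by (simp add: algebra_simps)
  moreover have "(a0 + \<rho>) * (b0 + \<xi>) \<le> a * b"
    using assms by (intro mult_mono) auto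
  ultimately have ab: "a0 * b0 + ?m \<le> a * b" by linarith
  have "(a0\<^sup>2 + ?m) * sp + (b0\<^sup>2 + ?m) * sq + 2 * (a0 * b0 + ?m) * spq
      \<le> a\<^sup>2 * sp + b\<^sup>2 * sq + 2 * (a * b) * spq"
    using sq_a sq_b ab sig by (intro add_mono mult_right_mono) auto
  then show ?thesis unfolding quad_form_def by (simp add: algebra_simps)
qed

lemma quad_form_path_margin:
  fixes rr xx s :: "nat \<Rightarrow> real"
  assumes k: "2 \<le> k" and pos: "\<forall>i<k. 0 < rr i \<and> 0 < xx i"
    and sign: "(\<forall>i<k. 0 \<le> s i) \<or> (\<forall>i<k. s i \<le> 0)"
    and \<rho>: "0 \<le> \<rho>" "\<rho> \<le> rr 1" and \<xi>: "0 \<le> \<xi>" "\<xi> \<le> xx 1"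
    and sig: "0 \<le> sp" "0 \<le> sq" "0 \<le> spq"
  shows "quad_form sp sq spq (rr 0 * s 0) (xx 0 * s 0) + min (\<rho>\<^sup>2) (\<xi>\<^sup>2) * (s 1)\<^sup>2 * (sp + sq + 2 * spq)
         \<le> quad_form sp sq spq (\<Sum>i<k. rr i * s i) (\<Sum>i<k. xx i * s i)"
proof -
  have nonneg: "quad_form sp sq spq (rr 0 * t 0) (xx 0 * t 0) + min (\<rho>\<^sup>2) (\<xi>\<^sup>2) * (t 1)\<^sup>2 * (sp + sq + 2 * spq)
         \<le> quad_form sp sq spq (\<Sum>i<k. rr i * t i) (\<Sum>i<k. xx i * t i)"
    if t: "\<forall>i<k. 0 \<le> t i" for t
  proof -
    have prod: "\<forall>i<k. 0 \<le> rr i * t i \<and> 0 \<le> xx i * t i" using pos t by (meson less_imp_le mult_nonneg_nonneg)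
    then have "rr 0 * t 0 + rr 1 * t 1 \<le> (\<Sum>i<k. rr i * t i)"
      and "xx 0 * t 0 + xx 1 * t 1 \<le> (\<Sum>i<k. xx i * t i)"
      using sum_mono2[of "{..<k}" "{0, 1}" "\<lambda>i. rr i * t i"]
        sum_mono2[of "{..<k}" "{0, 1}" "\<lambda>i. xx i * t i"] k by (simp_all add: subset_eq)
    moreover have "\<rho> * t 1 \<le> rr 1 * t 1" "\<xi> * t 1 \<le> xx 1 * t 1"
      using \<rho> \<xi> t k by (simp_all add: mult_right_mono)
    ultimately have "quad_form sp sq spq (rr 0 * t 0) (xx 0 * t 0)
        + min ((\<rho> * t 1)\<^sup>2) ((\<xi> * t 1)\<^sup>2) * (sp + sq + 2 * spq)
        \<le> quad_form sp sq spq (\<Sum>i<k. rr i * t i) (\<Sum>i<k. xx i * t i)"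
      using prod t k \<rho> \<xi> sig by (intro quad_form_margin) auto
    moreover have "min ((\<rho> * t 1)\<^sup>2) ((\<xi> * t 1)\<^sup>2) = min (\<rho>\<^sup>2) (\<xi>\<^sup>2) * (t 1)\<^sup>2"
      by (simp add: power_mult_distrib min_mult_distrib_right)
    ultimately show ?thesis by simp
  qed
  show ?thesis
  proof (cases "\<forall>i<k. 0 \<le> s i")
    case True
    then show ?thesis using nonneg by blast
  next
    case False
    then have "\<forall>i<k. 0 \<le> - s i" using sign by auto
    from nonneg[OF this] show ?thesis
      by (simp add: sum_negf quad_form_uminus[of sp sq spq "_ * s 0", simplified]
          flip: quad_form_uminus[of sp sq spq "\<Sum>i<k. rr i * s i"])
  qed
qed

context rooted_tree
begin

text \<open>The expression obtained for \<open>\<phi>\<^sub>y\<^sub>z\<close> under the LC-PF model, with \<open>sp d\<close>, \<open>sq d\<close>, \<open>spq d\<close>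
  standing for \<open>\<Omega>\<^sub>p(d,d)\<close>, \<open>\<Omega>\<^sub>q(d,d)\<close>, \<open>\<Omega>\<^sub>p\<^sub>q(d,d)\<close>.\<close>

definition phi_green ::
  "('v set \<Rightarrow> real) \<Rightarrow> ('v set \<Rightarrow> real) \<Rightarrow> ('v \<Rightarrow> real) \<Rightarrow> ('v \<Rightarrow> real) \<Rightarrow> ('v \<Rightarrow> real)
    \<Rightarrow> 'v \<Rightarrow> 'v \<Rightarrow> real" where
  "phi_green r x sp sq spq y z = (\<Sum>d\<in>V - {rt}.
     quad_form (sp d) (sq d) (spq d) (green r y d - green r z d) (green x y d - green x z d))"

lemma phi_green_path_gap:
  assumes sp: "simple_path E ps" and len: "3 \<le> length ps"
    and r: "\<forall>e\<in>E. 0 < r e" and x: "\<forall>e\<in>E. 0 < x e"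
    and sig: "\<forall>d\<in>V - {rt}. 0 \<le> sp d \<and> 0 \<le> sq d \<and> 0 \<le> spq d"
  shows "phi_green r x sp sq spq (hd ps) (ps ! 1)
           + min ((Min (r ` E))\<^sup>2) ((Min (x ` E))\<^sup>2) * Min ((\<lambda>d. sp d + sq d + 2 * spq d) ` (V - {rt}))
         \<le> phi_green r x sp sq spq (hd ps) (last ps)"
proof -
  let ?N = "V - {rt}" and ?k = "length ps - 1"
  let ?e = "\<lambda>i. {ps ! i, ps ! Suc i}" and ?s = "\<lambda>d i. side_sign (ps ! i) (ps ! Suc i) d"
  let ?m = "min ((Min (r ` E))\<^sup>2) ((Min (x ` E))\<^sup>2)" and ?val = "\<lambda>d. sp d + sq d + 2 * spq d"
  let ?Q = "\<lambda>d y z. quad_form (sp d) (sq d) (spq d) (green r y d - green r z d) (green x y d - green x z d)"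
  have edge: "?e i \<in> E" if "i < ?k" for i using adj_edge[OF simple_path_adj[OF sp]] that by simp
  then have pos: "\<forall>i<?k. 0 < r (?e i) \<and> 0 < x (?e i)" using r x by simp
  have e1: "?e 1 \<in> E" by (rule edge) (use len in linarith)
  then have "Min (r ` E) \<in> r ` E" "Min (x ` E) \<in> x ` E" using finite_E by (auto intro!: Min_in)
  then have min_e1: "0 \<le> Min (r ` E)" "Min (r ` E) \<le> r (?e 1)" "0 \<le> Min (x ` E)" "Min (x ` E) \<le> x (?e 1)"
    using finite_E e1 r x by (auto intro: less_imp_le)
  have per_node: "?Q d (hd ps) (ps ! 1) + ?m * (?s d 1)\<^sup>2 * ?val d \<le> ?Q d (hd ps) (last ps)"
    if d: "d \<in> ?N" for d
  proof -
    have "green w (hd ps) d - green w (ps ! 1) d = w (?e 0) * ?s d 0" for w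
      using green_diff_adj[OF simple_path_adj[OF sp, of 0]] d len sp
      by (simp add: hd_conv_nth simple_path_def)
    then show ?thesis
      using green_diff_path[OF sp] d sig
        quad_form_path_margin[OF _ pos side_sign_path_same_sign[OF sp] min_e1] len by simp
  qed
  obtain ds where ds: "ds \<in> ?N" "?s ds 1 \<noteq> 0"
    using side_sign_nonzero[OF simple_path_adj[OF sp, of 1]] len by auto
  then have "(?s ds 1)\<^sup>2 = 1" using side_sign_cases[of "ps ! 1" "ps ! Suc 1" ds] by auto
  then have "?m * Min (?val ` ?N) \<le> ?m * (?s ds 1)\<^sup>2 * ?val ds"
    using ds finite_V by (simp add: mult_left_mono)
  also have "\<dots> \<le> (\<Sum>d\<in>?N. ?m * (?s d 1)\<^sup>2 * ?val d)"
    using ds finite_V sig by (intro member_le_sum) auto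
  also have "\<dots> \<le> (\<Sum>d\<in>?N. ?Q d (hd ps) (last ps) - ?Q d (hd ps) (ps ! 1))"
    using per_node by (intro sum_mono) (simp add: algebra_simps)
  finally show ?thesis unfolding phi_green_def by (simp add: sum_subtractf)
qed

end

section \<open>Second moments of the LC-PF voltages\<close>

lemma cov_commute: "cov M X Y = cov M Y X"
  unfolding cov_def by (simp add: mult.commute)

lemma cov_self_nonneg: "0 \<le> cov M X X"
  unfolding cov_def by (rule Bochner_Integration.integral_nonneg) simp

definition square_integrable :: "'w measure \<Rightarrow> ('w \<Rightarrow> real) \<Rightarrow> bool" where
  "square_integrable M f \<longleftrightarrow> f \<in> borel_measurable M \<and> integrable M (\<lambda>\<omega>. (f \<omega>)\<^sup>2)"

lemma square_integrable_mult:
  assumes "square_integrable M f" "square_integrable M g"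
  shows "integrable M (\<lambda>\<omega>. f \<omega> * g \<omega>)"
proof (rule Bochner_Integration.integrable_bound)
  show "integrable M (\<lambda>\<omega>. (f \<omega>)\<^sup>2 + (g \<omega>)\<^sup>2)"
    using assms unfolding square_integrable_def by simp
  show "(\<lambda>\<omega>. f \<omega> * g \<omega>) \<in> borel_measurable M"
    using assms unfolding square_integrable_def by (intro borel_measurable_times) auto
  have "\<bar>f \<omega>\<bar> * \<bar>g \<omega>\<bar> \<le> (f \<omega>)\<^sup>2 + (g \<omega>)\<^sup>2" for \<omega>
  proof -
    have "2 * (\<bar>f \<omega>\<bar> * \<bar>g \<omega>\<bar>) \<le> (f \<omega>)\<^sup>2 + (g \<omega>)\<^sup>2"
      using sum_squares_bound[of "\<bar>f \<omega>\<bar>" "\<bar>g \<omega>\<bar>"] by (simp add: mult.assoc)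
    moreover have "0 \<le> \<bar>f \<omega>\<bar> * \<bar>g \<omega>\<bar>" by simp
    ultimately show ?thesis by linarith
  qed
  then show "AE \<omega> in M. norm (f \<omega> * g \<omega>) \<le> norm ((f \<omega>)\<^sup>2 + (g \<omega>)\<^sup>2)"
    by (simp add: abs_mult)
qed

lemma square_integrable_lincomb:
  assumes f: "square_integrable M f" and g: "square_integrable M g"
  shows "square_integrable M (\<lambda>\<omega>. a * f \<omega> + b * g \<omega>)"
proof -
  have "(\<lambda>\<omega>. (a * f \<omega> + b * g \<omega>)\<^sup>2)
      = (\<lambda>\<omega>. a\<^sup>2 * (f \<omega>)\<^sup>2 + 2 * a * b * (f \<omega> * g \<omega>) + b\<^sup>2 * (g \<omega>)\<^sup>2)"
    by (simp add: power2_eq_square algebra_simps)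
  moreover have "(\<lambda>\<omega>. a * f \<omega> + b * g \<omega>) \<in> borel_measurable M"
    using f g unfolding square_integrable_def by (intro borel_measurable_add borel_measurable_times) auto
  ultimately show ?thesis
    using assms square_integrable_mult[OF f g] unfolding square_integrable_def by simp
qed

context prob_space
begin

lemma square_integrable_const: "square_integrable M (\<lambda>_. c)"
  unfolding square_integrable_def by simp

lemma square_integrable_diff_const:
  "square_integrable M f \<Longrightarrow> square_integrable M (\<lambda>\<omega>. f \<omega> - c)"
  using square_integrable_lincomb[OF _ square_integrable_const, of f 1 "-1" c] by simp

lemma square_integrable_integrable: "square_integrable M f \<Longrightarrow> integrable M f"
  unfolding square_integrable_def by (blast intro: square_integrable_imp_integrable)

lemma integral_centered_lincomb_product:
  assumes X1: "square_integrable M X1" and Y1: "square_integrable M Y1"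
    and X2: "square_integrable M X2" and Y2: "square_integrable M Y2"
  shows "expectation (\<lambda>\<omega>. (\<alpha>1 * (X1 \<omega> - expectation X1) + \<beta>1 * (Y1 \<omega> - expectation Y1))
                         * (\<alpha>2 * (X2 \<omega> - expectation X2) + \<beta>2 * (Y2 \<omega> - expectation Y2)))
       = \<alpha>1 * \<alpha>2 * cov M X1 X2 + \<alpha>1 * \<beta>2 * cov M X1 Y2 + \<beta>1 * \<alpha>2 * cov M Y1 X2 + \<beta>1 * \<beta>2 * cov M Y1 Y2"
proof -
  define c where "c Z = (\<lambda>\<omega>. Z \<omega> - expectation Z)" for Z :: "'a \<Rightarrow> real"
  have sq: "square_integrable M (c Z)" if "square_integrable M Z" for Z
    unfolding c_def using square_integrable_diff_const[OF that] .
  have int: "integrable M (\<lambda>\<omega>. c Z \<omega> * c Z' \<omega>)"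
    if "square_integrable M Z" "square_integrable M Z'" for Z Z'
    using square_integrable_mult[OF sq[OF that(1)] sq[OF that(2)]] .
  have cov_c: "cov M Z Z' = expectation (\<lambda>\<omega>. c Z \<omega> * c Z' \<omega>)" for Z Z'
    unfolding cov_def c_def ..
  have "(\<lambda>\<omega>. (\<alpha>1 * c X1 \<omega> + \<beta>1 * c Y1 \<omega>) * (\<alpha>2 * c X2 \<omega> + \<beta>2 * c Y2 \<omega>))
      = (\<lambda>\<omega>. \<alpha>1 * \<alpha>2 * (c X1 \<omega> * c X2 \<omega>) + \<alpha>1 * \<beta>2 * (c X1 \<omega> * c Y2 \<omega>)
             + \<beta>1 * \<alpha>2 * (c Y1 \<omega> * c X2 \<omega>) + \<beta>1 * \<beta>2 * (c Y1 \<omega> * c Y2 \<omega>))"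
    by (simp add: algebra_simps)
  then show ?thesis
    using int[OF X1 X2] int[OF X1 Y2] int[OF Y1 X2] int[OF Y1 Y2]
    unfolding cov_c by (simp add: c_def)
qed

end

lemma integral_square_sum_orthogonal:
  assumes fin: "finite N" and U: "\<forall>d\<in>N. square_integrable M (U d)"
    and orth: "\<forall>d\<in>N. \<forall>d'\<in>N. d \<noteq> d' \<longrightarrow> integral\<^sup>L M (\<lambda>\<omega>. U d \<omega> * U d' \<omega>) = 0"
  shows "integral\<^sup>L M (\<lambda>\<omega>. (\<Sum>d\<in>N. U d \<omega>)\<^sup>2) = (\<Sum>d\<in>N. integral\<^sup>L M (\<lambda>\<omega>. (U d \<omega>)\<^sup>2))"
proof -
  have int: "integrable M (\<lambda>\<omega>. U d \<omega> * U d' \<omega>)" if "d \<in> N" "d' \<in> N" for d d'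
    using U that by (simp add: square_integrable_mult)
  have "integral\<^sup>L M (\<lambda>\<omega>. (\<Sum>d\<in>N. U d \<omega>)\<^sup>2) = integral\<^sup>L M (\<lambda>\<omega>. \<Sum>d\<in>N. \<Sum>d'\<in>N. U d \<omega> * U d' \<omega>)"
    by (simp add: power2_eq_square sum_product)
  also have "\<dots> = (\<Sum>d\<in>N. \<Sum>d'\<in>N. integral\<^sup>L M (\<lambda>\<omega>. U d \<omega> * U d' \<omega>))"
    using int by (simp add: Bochner_Integration.integral_sum Bochner_Integration.integrable_sum)
  also have "\<dots> = (\<Sum>d\<in>N. \<Sum>d'\<in>N. if d' = d then integral\<^sup>L M (\<lambda>\<omega>. U d \<omega> * U d \<omega>) else 0)"
    using orth by (intro sum.cong refl) auto
  also have "\<dots> = (\<Sum>d\<in>N. integral\<^sup>L M (\<lambda>\<omega>. (U d \<omega>)\<^sup>2))"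
    using fin by (simp add: power2_eq_square)
  finally show ?thesis .
qed

lemma (in prob_space) integral_square_sum_uncorrelated:
  assumes fin: "finite N"
    and X: "\<forall>d\<in>N. square_integrable M (X d)" and Y: "\<forall>d\<in>N. square_integrable M (Y d)"
    and cXX: "\<forall>d\<in>N. \<forall>d'\<in>N. d \<noteq> d' \<longrightarrow> cov M (X d) (X d') = 0"
    and cYY: "\<forall>d\<in>N. \<forall>d'\<in>N. d \<noteq> d' \<longrightarrow> cov M (Y d) (Y d') = 0"
    and cYX: "\<forall>d\<in>N. \<forall>d'\<in>N. d \<noteq> d' \<longrightarrow> cov M (Y d) (X d') = 0"
  shows "expectation (\<lambda>\<omega>. (\<Sum>d\<in>N. \<alpha> d * (X d \<omega> - expectation (X d))
                                   + \<beta> d * (Y d \<omega> - expectation (Y d)))\<^sup>2)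
       = (\<Sum>d\<in>N. quad_form (cov M (X d) (X d)) (cov M (Y d) (Y d)) (cov M (X d) (Y d)) (\<alpha> d) (\<beta> d))"
proof -
  define U where "U d \<omega> = \<alpha> d * (X d \<omega> - expectation (X d)) + \<beta> d * (Y d \<omega> - expectation (Y d))" for d \<omega>
  have U_prod: "expectation (\<lambda>\<omega>. U d \<omega> * U d' \<omega>)
      = \<alpha> d * \<alpha> d' * cov M (X d) (X d') + \<alpha> d * \<beta> d' * cov M (X d) (Y d')
        + \<beta> d * \<alpha> d' * cov M (Y d) (X d') + \<beta> d * \<beta> d' * cov M (Y d) (Y d')"
    if "d \<in> N" "d' \<in> N" for d d'
    unfolding U_def using X Y that by (intro integral_centered_lincomb_product) auto
  have "expectation (\<lambda>\<omega>. (\<Sum>d\<in>N. U d \<omega>)\<^sup>2) = (\<Sum>d\<in>N. expectation (\<lambda>\<omega>. (U d \<omega>)\<^sup>2))"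
  proof (rule integral_square_sum_orthogonal[OF fin])
    show "\<forall>d\<in>N. square_integrable M (U d)"
      unfolding U_def using X Y
      by (auto intro!: square_integrable_lincomb square_integrable_diff_const)
    show "\<forall>d\<in>N. \<forall>d'\<in>N. d \<noteq> d' \<longrightarrow> expectation (\<lambda>\<omega>. U d \<omega> * U d' \<omega>) = 0"
    proof (intro ballI impI)
      fix d d' assume d: "d \<in> N" "d' \<in> N" "d \<noteq> d'"
      have "cov M (X d) (Y d') = cov M (Y d') (X d)" by (rule cov_commute)
      then show "expectation (\<lambda>\<omega>. U d \<omega> * U d' \<omega>) = 0"
        using d cXX cYY cYX by (simp add: U_prod)
    qed
  qed
  also have "\<dots> = (\<Sum>d\<in>N. quad_form (cov M (X d) (X d)) (cov M (Y d) (Y d)) (cov M (X d) (Y d)) (\<alpha> d) (\<beta> d))"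
    using U_prod cov_commute[of M "Y _" "X _"]
    by (intro sum.cong refl) (simp add: quad_form_def power2_eq_square algebra_simps)
  finally show ?thesis unfolding U_def .
qed

context rooted_tree
begin

lemma lcpf_v_centered:
  assumes r: "\<forall>e\<in>E. 0 < r e" and x: "\<forall>e\<in>E. 0 < x e" and prob: "prob_space M"
    and p: "\<forall>d\<in>V - {rt}. integrable M (p d)" and q: "\<forall>d\<in>V - {rt}. integrable M (q d)"
    and y: "y \<in> V"
  shows "lcpf_v V E rt r x v0 p q y \<omega> - integral\<^sup>L M (lcpf_v V E rt r x v0 p q y)
       = (\<Sum>d\<in>V - {rt}. green r y d * (p d \<omega> - integral\<^sup>L M (p d))
                          + green x y d * (q d \<omega> - integral\<^sup>L M (q d)))"
proof (cases "y = rt")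
  case True
  then show ?thesis unfolding lcpf_v_def using prob_space.prob_space[OF prob] by (simp add: green_root)
next
  case False
  let ?N = "V - {rt}"
  have v: "lcpf_v V E rt r x v0 p q y = (\<lambda>\<omega>. \<Sum>d\<in>?N. green r y d * p d \<omega> + green x y d * q d \<omega>)"
    unfolding lcpf_v_def using False Hinv_eq_green[OF r y] Hinv_eq_green[OF x y] by auto
  have "integral\<^sup>L M (lcpf_v V E rt r x v0 p q y)
      = (\<Sum>d\<in>?N. green r y d * integral\<^sup>L M (p d) + green x y d * integral\<^sup>L M (q d))"
    unfolding v using p q by (simp add: Bochner_Integration.integral_sum)
  then show ?thesis
    unfolding v by (simp add: sum_subtractf[symmetric] algebra_simps)
qed

lemma phi_lcpf_v:
  assumes r: "\<forall>e\<in>E. 0 < r e" and x: "\<forall>e\<in>E. 0 < x e" and prob: "prob_space M"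
    and p: "\<forall>d\<in>V - {rt}. square_integrable M (p d)" and q: "\<forall>d\<in>V - {rt}. square_integrable M (q d)"
    and cov_p: "\<forall>a\<in>V - {rt}. \<forall>b\<in>V - {rt}. a \<noteq> b \<longrightarrow> cov M (p a) (p b) = 0"
    and cov_q: "\<forall>a\<in>V - {rt}. \<forall>b\<in>V - {rt}. a \<noteq> b \<longrightarrow> cov M (q a) (q b) = 0"
    and cov_qp: "\<forall>a\<in>V - {rt}. \<forall>b\<in>V - {rt}. a \<noteq> b \<longrightarrow> cov M (q a) (p b) = 0"
    and y: "y \<in> V" and z: "z \<in> V"
  shows "phi M (lcpf_v V E rt r x v0 p q) y z
       = phi_green r x (\<lambda>d. cov M (p d) (p d)) (\<lambda>d. cov M (q d) (q d)) (\<lambda>d. cov M (p d) (q d)) y z"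
proof -
  interpret prob_space M by (rule prob)
  let ?v = "lcpf_v V E rt r x v0 p q"
  have int: "\<forall>d\<in>V - {rt}. integrable M (p d)" "\<forall>d\<in>V - {rt}. integrable M (q d)"
    using p q square_integrable_integrable by blast+
  have "(?v y \<omega> - expectation (?v y)) - (?v z \<omega> - expectation (?v z))
      = (\<Sum>d\<in>V - {rt}. (green r y d - green r z d) * (p d \<omega> - expectation (p d))
                         + (green x y d - green x z d) * (q d \<omega> - expectation (q d)))" for \<omega>
    unfolding lcpf_v_centered[OF r x prob int y] lcpf_v_centered[OF r x prob int z]
    by (simp add: sum_subtractf[symmetric] algebra_simps)
  then show ?thesis
    unfolding phi_def phi_green_def
    using integral_square_sum_uncorrelated[OF _ p q cov_p cov_q cov_qp] finite_V by simp
qed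

end

theorem theorem8:
  fixes V :: "'v set" and E :: "'v set set" and rt :: 'v
    and r x :: "'v set \<Rightarrow> real" and v0 :: real
    and M :: "'w measure" and p q :: "'v \<Rightarrow> 'w \<Rightarrow> real"
  assumes tree: "is_tree V E"
    and root: "rt \<in> V" "card {c\<in>V. adj E rt c} = 1"
    and r_pos: "\<forall>e\<in>E. r e > 0" and x_pos: "\<forall>e\<in>E. x e > 0"
    and prob: "prob_space M"
    and p_rv: "\<forall>d\<in>V - {rt}. p d \<in> borel_measurable M \<and> integrable M (\<lambda>\<omega>. (p d \<omega>)\<^sup>2)"
    and q_rv: "\<forall>d\<in>V - {rt}. q d \<in> borel_measurable M \<and> integrable M (\<lambda>\<omega>. (q d \<omega>)\<^sup>2)"
    and cov_p: "\<forall>a\<in>V - {rt}. \<forall>b\<in>V - {rt}. a \<noteq> b \<longrightarrow> cov M (p a) (p b) = 0"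
    and cov_q: "\<forall>a\<in>V - {rt}. \<forall>b\<in>V - {rt}. a \<noteq> b \<longrightarrow> cov M (q a) (q b) = 0"
    and cov_qp: "\<forall>a\<in>V - {rt}. \<forall>b\<in>V - {rt}. a \<noteq> b \<longrightarrow> cov M (q a) (p b) = 0"
    and cov_qp_diag: "\<forall>a\<in>V - {rt}. cov M (q a) (p a) \<ge> 0"
  defines "k1 \<equiv> min ((Min (r ` E))\<^sup>2) ((Min (x ` E))\<^sup>2)
                 * Min ((\<lambda>d. cov M (p d) (p d) + cov M (q d) (q d) + 2 * cov M (p d) (q d)) ` (V - {rt}))"
    and "v \<equiv> lcpf_v V E rt r x v0 p q"
  shows "\<forall>a\<in>V. \<forall>b\<in>V. \<forall>ps. b \<noteq> a \<and> \<not> adj E a b \<and> simple_path E ps \<and> hd ps = a \<and> last ps = b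
           \<longrightarrow> phi M v a b \<ge> phi M v a (ps ! 1) + k1"
proof (intro ballI allI impI)
  fix a b ps
  assume a: "a \<in> V" and b: "b \<in> V"
    and path: "b \<noteq> a \<and> \<not> adj E a b \<and> simple_path E ps \<and> hd ps = a \<and> last ps = b"
  interpret rooted_tree V E rt using tree root(1) by unfold_locales
  let ?phi = "phi_green r x (\<lambda>d. cov M (p d) (p d)) (\<lambda>d. cov M (q d) (q d)) (\<lambda>d. cov M (p d) (q d))"
  have sp: "simple_path E ps" using path by simp
  have len: "3 \<le> length ps" using simple_path_length_ge_3[OF sp] path by auto
  then have "ps ! 1 \<in> V" using adj_in_V[OF simple_path_adj[OF sp, of 0]] by simp
  moreover have "\<forall>d\<in>V - {rt}. square_integrable M (p d) \<and> square_integrable M (q d)"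
    using p_rv q_rv unfolding square_integrable_def by simp
  ultimately have "phi M v a (ps ! 1) = ?phi a (ps ! 1)" and "phi M v a b = ?phi a b"
    unfolding v_def using phi_lcpf_v[OF r_pos x_pos prob _ _ cov_p cov_q cov_qp] a b by simp_all
  moreover have "\<forall>d\<in>V - {rt}. 0 \<le> cov M (p d) (p d) \<and> 0 \<le> cov M (q d) (q d) \<and> 0 \<le> cov M (p d) (q d)"
    using cov_qp_diag cov_self_nonneg cov_commute by metis
  ultimately show "phi M v a (ps ! 1) + k1 \<le> phi M v a b"
    using phi_green_path_gap[OF sp len r_pos x_pos] path unfolding k1_def by simp
qed

end
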